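(* Let $g(m)=10^{m/5}$ and \[ f(m)=\begin{cases} \binom{m}{2} & \text{if } 1\le m\le 8;\\ \binom{\lfloor m/2\rfloor}{2}\binom{\lceil m/2\rceil}{2}-(\lfloor m/2\rfloor-1)(\lceil m/2\rceil-1)+1 & \text{if } 9\le m\le 13;\\ 10^{\frac{m-1}{5}}+\frac{m+144}{30}\cdot 6^{\frac{m-6}{5}} & \text{if } 14\le m\le 30;\\ 10^{\frac{m-1}{5}}+\frac{m-1}{5}\cdot 6^{\frac{m-6}{5}} & \text{if } m\ge 31. \end{cases} \] Let $n\ge 14$ be an integer. Then: (1) for $r\in\{4,5,6\}$, $\binom{r-1}{2}f(n-r)+(r-1)f(n-r-1)+g(n-r-2)<f(n)$; (2) for $r\in\{4,5,6\}$, $\binom{r-1}{2}f(n-r)+r\,g(n-r-2)+g(n-r-3)<f(n)$; (3) for $r\in\{4,6\}$, $\binom{r-1}{2}f(n-r)+(r-1)g(n-r-1)+6^{\frac{n-r-1}{5}}<f(n)$; (4) for $r\in\{4,6\}$, $\binom{r-1}{2}f(n-r)+\frac{f(4)}{g(4)}(r-1)g(n-r-1)+g(n-r-3)<f(n)$. *)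

theory Defs
  imports Complex_Main
begin

definition g :: "nat \<Rightarrow> real" where
  "g m = 10 powr (real m / 5)"

definition f :: "nat \<Rightarrow> real" where
  "f m = (if m \<le> 8 then real (m choose 2)
          else if m \<le> 13 then
            real ((m div 2) choose 2) * real (((m + 1) div 2) choose 2)
            - (real (m div 2) - 1) * (real ((m + 1) div 2) - 1) + 1
          else if m \<le> 30 then
            10 powr ((real m - 1) / 5) + (real m + 144) / 30 * 6 powr ((real m - 6) / 5)
          else
            10 powr ((real m - 1) / 5) + (real m - 1) / 5 * 6 powr ((real m - 6) / 5))"

end

theory Submission
  imports Defs
begin

(* With alpha = 10^(1/5) and beta = 6^(1/5) we have g m = alpha^m and, for m >= 31,
   f m = alpha^(m-1) + (m-1)/5 * beta^(m-6).  For 14 <= n <= 37 each inequality is a finite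
   numerical check, using alpha^5 = 10, beta^5 = 6 and five-digit enclosures of alpha^i, beta^i
   for i <= 4.  For n = 38 + k all arguments of f are at least 31, so both sides are linear in
   alpha^(k+i), beta^(k+i) and k beta^(k+i).  The alpha-part of f n beats the alpha-parts on the
   left by a constant factor, and this surplus absorbs the excess in the k beta^k terms because
   alpha^k >= beta^k (1 + 0.1075 k) by Bernoulli's inequality for (alpha/beta)^k. *)

lemma powr_divide_eq_power:
  fixes x d :: real
  assumes "0 < x"
  shows "x powr (real m / d) = (x powr (1 / d)) ^ m"
  using assms by (simp add: powr_realpow[symmetric] powr_powr)

lemma bounds_by_power:
  fixes x lo hi :: real
  assumes "lo ^ n < x ^ n" "x ^ n < hi ^ n" "0 \<le> x" "0 \<le> hi"
  shows "lo < x \<and> x < hi"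
  using assms power_less_imp_less_base by blast

lemma mult_bounds:
  fixes lo x hi y :: real
  assumes "lo < x \<and> x < hi" "0 \<le> y"
  shows "lo * y \<le> x * y \<and> x * y \<le> hi * y"
  using assms by (auto intro: mult_right_mono)

definition \<alpha> :: real where "\<alpha> = 10 powr (1 / 5)"
definition \<beta> :: real where "\<beta> = 6 powr (1 / 5)"

lemma ten_powr_eq_alpha_power: "10 powr (real m / 5) = \<alpha> ^ m"
  unfolding \<alpha>_def by (rule powr_divide_eq_power) simp

lemma six_powr_eq_beta_power: "6 powr (real m / 5) = \<beta> ^ m"
  unfolding \<beta>_def by (rule powr_divide_eq_power) simp

lemma alpha_pos: "0 < \<alpha>" and beta_pos: "0 < \<beta>"
  by (simp_all add: \<alpha>_def \<beta>_def)

lemma alpha_pow_5: "\<alpha> ^ 5 = 10"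
  using ten_powr_eq_alpha_power[of 5] by simp

lemma beta_pow_5: "\<beta> ^ 5 = 6"
  using six_powr_eq_beta_power[of 5] by simp

lemma alpha_power_reduce: "5 \<le> m \<Longrightarrow> \<alpha> ^ m = 10 * \<alpha> ^ (m - 5)"
  by (metis alpha_pow_5 le_add_diff_inverse power_add)

lemma beta_power_reduce: "5 \<le> m \<Longrightarrow> \<beta> ^ m = 6 * \<beta> ^ (m - 5)"
  by (metis beta_pow_5 le_add_diff_inverse power_add)

lemma alpha_mult_power: "\<alpha> * \<alpha> ^ m = \<alpha> ^ (m + 1)" "\<alpha> * \<alpha> = \<alpha> ^ 2"
  by (simp_all add: power2_eq_square)

lemma alpha_power_bounds:
  "1.58489 < \<alpha> \<and> \<alpha> < 1.5849"
  "2.51188 < \<alpha> ^ 2 \<and> \<alpha> ^ 2 < 2.51189"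
  "3.98107 < \<alpha> ^ 3 \<and> \<alpha> ^ 3 < 3.98108"
  "6.30957 < \<alpha> ^ 4 \<and> \<alpha> ^ 4 < 6.30958"
  by (rule bounds_by_power[where n = 5];
      simp add: alpha_power_reduce power_divide less_imp_le[OF alpha_pos])+

lemma beta_power_bounds:
  "1.43096 < \<beta> \<and> \<beta> < 1.43097"
  "2.04767 < \<beta> ^ 2 \<and> \<beta> ^ 2 < 2.04768"
  "2.93015 < \<beta> ^ 3 \<and> \<beta> ^ 3 < 2.93016"
  "4.19296 < \<beta> ^ 4 \<and> \<beta> ^ 4 < 4.19297"
  by (rule bounds_by_power[where n = 5];
      simp add: beta_power_reduce power_divide less_imp_le[OF beta_pos])+

lemma alpha_beta_bernoulli: "\<beta> ^ k + 0.1075 * (real k * \<beta> ^ k) \<le> \<alpha> ^ k"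
proof -
  have "0.1075 \<le> \<alpha> / \<beta> - 1"
    using alpha_power_bounds(1) beta_power_bounds(1) beta_pos by (simp add: field_simps)
  then have "1 + real k * 0.1075 \<le> 1 + real k * (\<alpha> / \<beta> - 1)"
    by (intro add_left_mono mult_left_mono) simp_all
  also have "\<dots> \<le> (\<alpha> / \<beta>) ^ k"
    using Bernoulli_inequality[of "\<alpha> / \<beta> - 1" k] alpha_pos beta_pos by simp
  finally show ?thesis
    using beta_pos by (simp add: power_divide field_simps)
qed

lemma g_eq_alpha_power: "g m = \<alpha> ^ m"
  by (simp add: g_def ten_powr_eq_alpha_power)

lemma f_eq_powers:
  assumes "31 \<le> m"
  shows "f m = \<alpha> ^ (m - 1) + (real m - 1) / 5 * \<beta> ^ (m - 6)"
  using assms ten_powr_eq_alpha_power[of "m - 1"] six_powr_eq_beta_power[of "m - 6"]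
  by (simp add: f_def of_nat_diff)

lemma f4_div_g4: "f 4 / g 4 = 3 / 5 * \<alpha>"
proof -
  have "\<alpha> ^ 4 = 10 / \<alpha>"
    using alpha_pow_5 alpha_pos by (simp add: field_simps power_Suc[symmetric] del: power_Suc)
  then show ?thesis
    by (simp add: f_def choose_two g_eq_alpha_power)
qed

lemmas powr_numeral_eq_powers = ten_powr_eq_alpha_power[of "numeral k" for k, simplified]
     six_powr_eq_beta_power[of "numeral k" for k, simplified]

definition f_exceeds_bounds :: "nat \<Rightarrow> bool" where
  "f_exceeds_bounds n \<longleftrightarrow>
         (\<forall>r \<in> {4, 5, 6::nat}.
            real ((r - 1) choose 2) * f (n - r) + real (r - 1) * f (n - r - 1)
              + g (n - r - 2) < f n)
       \<and> (\<forall>r \<in> {4, 5, 6::nat}.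
            real ((r - 1) choose 2) * f (n - r) + real r * g (n - r - 2)
              + g (n - r - 3) < f n)
       \<and> (\<forall>r \<in> {4, 6::nat}.
            real ((r - 1) choose 2) * f (n - r) + real (r - 1) * g (n - r - 1)
              + 6 powr ((real n - real r - 1) / 5) < f n)
       \<and> (\<forall>r \<in> {4, 6::nat}.
            real ((r - 1) choose 2) * f (n - r) + f 4 / g 4 * real (r - 1) * g (n - r - 1)
              + g (n - r - 3) < f n)"

lemma f_exceeds_bounds_small:
  assumes "14 \<le> n" "n \<le> 37"
  shows "f_exceeds_bounds n"
proof -
  from assms have "n \<in> set [14..<38]"
    by (simp del: upt_rec_numeral)
  then show ?thesis
    using alpha_power_bounds beta_power_bounds
    unfolding f_exceeds_bounds_def f4_div_g4
    by (simp del: set_upt, elim disjE; simp add: f_def g_eq_alpha_power alpha_mult_power choose_two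
        powr_numeral_eq_powers alpha_power_reduce beta_power_reduce power_divide)
qed

lemma f_exceeds_bounds_large:
  assumes "38 \<le> n"
  shows "f_exceeds_bounds n"
proof -
  obtain k where n: "n = 38 + k"
    using assms le_Suc_ex by blast
  \<comment> \<open>Opaque names for the three exponential families: after reducing indices modulo 5 with
    \<open>reduce\<close>, both sides of every inequality are linear in \<open>A i, B i, K i\<close> (\<open>i < 5\<close>).\<close>
  define A B K where "A i = \<alpha> ^ (k + i)" and "B i = \<beta> ^ (k + i)" and "K i = real k * B i"
    for i
  have reduce: "A i = 10 * A (i - 5)" "B i = 6 * B (i - 5)" "K i = 6 * K (i - 5)"
    if "5 \<le> i" for i
    using that alpha_power_reduce[of "k + i"] beta_power_reduce[of "k + i"]
    by (simp_all add: A_def B_def K_def add_diff_assoc)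
  have succ: "A (i + 1) = \<alpha> * A i" "B (i + 1) = \<beta> * B i" "K (i + 1) = \<beta> * K i" for i
    by (simp_all add: A_def B_def K_def)
  have nonneg: "0 \<le> A i" "0 \<le> B i" "0 \<le> K i" for i
    using alpha_pos beta_pos by (simp_all add: A_def B_def K_def)
  have growth:
    "1.58489 * A i \<le> A (i + 1) \<and> A (i + 1) \<le> 1.5849 * A i"
    "1.43096 * B i \<le> B (i + 1) \<and> B (i + 1) \<le> 1.43097 * B i"
    "1.43096 * K i \<le> K (i + 1) \<and> K (i + 1) \<le> 1.43097 * K i" for i
    unfolding succ by (intro mult_bounds alpha_power_bounds(1) beta_power_bounds(1) nonneg)+
  have f_shift: "f (c + k) = A (c - 1) + ((real c - 1) * B (c - 6) + K (c - 6)) / 5"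
    if "31 \<le> c" for c
    using that f_eq_powers[of "c + k"]
    by (simp add: A_def B_def K_def add_diff_assoc add.commute algebra_simps)
  have g_shift: "g (c + k) = A c" and alpha_A: "\<alpha> * A c = A (c + 1)"
    and h_shift: "6 powr ((real c + real k) / 5) = B c" for c
    using six_powr_eq_beta_power[of "c + k"]
    by (simp_all add: A_def B_def g_eq_alpha_power add.commute)
  have bernoulli: "B 0 + 0.1075 * K 0 \<le> A 0" "0 < B 0"
    using alpha_beta_bernoulli beta_pos by (simp_all add: A_def B_def K_def)
  \<comment> \<open>nat's simp normal form of \<open>1\<close> is \<open>Suc 0\<close>, so without \<open>numeral_2_eq_2\<close> the index 2
    would occur both as \<open>2\<close> and as \<open>Suc (Suc 0)\<close>.\<close>
  show ?thesis
    using growth[of 0] growth[of 1] growth[of 2] growth[of 3] bernoulli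
    unfolding f_exceeds_bounds_def f4_div_g4 n
    by (simp add: f_shift g_shift alpha_A h_shift[of "numeral c" for c, simplified] reduce
        choose_two numeral_2_eq_2[symmetric]; intro conjI; argo)
qed

theorem lemma2p11:
  fixes n :: nat
  assumes "n \<ge> 14"
  shows "(\<forall>r \<in> {4, 5, 6::nat}.
            real ((r - 1) choose 2) * f (n - r) + real (r - 1) * f (n - r - 1)
              + g (n - r - 2) < f n)
       \<and> (\<forall>r \<in> {4, 5, 6::nat}.
            real ((r - 1) choose 2) * f (n - r) + real r * g (n - r - 2)
              + g (n - r - 3) < f n)
       \<and> (\<forall>r \<in> {4, 6::nat}.
            real ((r - 1) choose 2) * f (n - r) + real (r - 1) * g (n - r - 1)
              + 6 powr ((real n - real r - 1) / 5) < f n)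
       \<and> (\<forall>r \<in> {4, 6::nat}.
            real ((r - 1) choose 2) * f (n - r) + f 4 / g 4 * real (r - 1) * g (n - r - 1)
              + g (n - r - 3) < f n)"
proof -
  have "f_exceeds_bounds n"
  proof (cases "n \<le> 37")
    case True
    with assms show ?thesis by (rule f_exceeds_bounds_small)
  next
    case False
    then show ?thesis by (intro f_exceeds_bounds_large) simp
  qed
  then show ?thesis
    unfolding f_exceeds_bounds_def .
qed

end
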